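(* Let $q\in\mathbb C$ with $|q|=1$ and $q^2\neq 1$, and let $A,B$ be self-adjoint operators on a Hilbert space $\mathcal H$. Suppose $\lambda,\lambda q\in\rho(A)$ and $\mu,\mu q\in\rho(B)$. (i) If $\mathcal D\subseteq\mathcal D(AB)\cap\mathcal D(BA)$ is a linear subspace with $ABf=qBAf$ for all $f\in\mathcal D$, then $\mathcal E:=(B-\mu qI)\mathcal D$ is a linear subspace of $\mathcal D(A)$ and $$R_\mu(B)Ag=qAR_{\mu q}(B)g\qquad(\dagger)$$ for all $g\in\mathcal E$ (in particular $R_{\mu q}(B)g\in\mathcal D(A)$). (ii) If $\mathcal E$ is a linear subspace of $\mathcal D(A)$ such that $R_{\mu q}(B)g\in\mathcal D(A)$ and $(\dagger)$ holds for all $g\in\mathcal E$, then every $f\in\mathcal D:=R_{\mu q}(B)\mathcal E$ lies in $\mathcal D(AB)\cap\mathcal D(BA)$ and satisfies $ABf=qBAf$. (iii) If $\mathcal E$ is a linear subspace of $\mathcal D(A)$ and $(\dagger)$ holds for all $g\in\mathcal E$, then $$R_\lambda(A)R_\mu(B)h=qR_{\mu q}(B)R_{\lambda q}(A)h+\mu\lambda q(q-1)R_\lambda(A)R_\mu(B)R_{\mu q}(B)R_{\lambda q}(A)h\qquad(\dagger\dagger)$$ for all $h\in\mathcal F:=(A-\lambda qI)\mathcal E$. (iv) If $(\dagger\dagger)$ holds for all $h$ in a linear subspace $\mathcal F\subseteq\mathcal H$, then $(\dagger)$ holds (with $R_{\mu q}(B)g\in\mathcal D(A)$) for all $g\in\mathcal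 E:=R_{\lambda q}(A)\mathcal F$.
   Context: For a densely defined closed operator $T$, $\mathcal D(T)$ denotes its domain, $\rho(T)$ its resolvent set and $R_\lambda(T)=(T-\lambda I)^{-1}$ its resolvent. Products of unbounded operators have their natural domains. *)

theory Defs
  imports Complex_Main
begin

text \<open>The HOL library has no complex inner product spaces, so we introduce
  them as type classes (no axioms are added to the logic; the class
  complex is shown below to be an instance, so the classes are inhabited).\<close>

class scaleC =
  fixes scaleC :: "complex \<Rightarrow> 'a \<Rightarrow> 'a" (infixr \<open>*\<^sub>C\<close> 75)

class complex_vector = scaleC + ab_group_add +
  assumes scaleC_add_right: "a *\<^sub>C (x + y) = a *\<^sub>C x + a *\<^sub>C y"
    and scaleC_add_left: "(a + b) *\<^sub>C x = a *\<^sub>C x + b *\<^sub>C x"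
    and scaleC_scaleC: "a *\<^sub>C (b *\<^sub>C x) = (a * b) *\<^sub>C x"
    and scaleC_one: "1 *\<^sub>C x = x"

class complex_inner = complex_vector +
  fixes cinner :: "'a \<Rightarrow> 'a \<Rightarrow> complex"
  assumes cinner_commute: "cinner x y = cnj (cinner y x)"
    and cinner_add_left: "cinner (x + y) z = cinner x z + cinner y z"
    and cinner_scaleC_left: "cinner (r *\<^sub>C x) y = cnj r * cinner x y"
    and cinner_ge_zero: "0 \<le> Re (cinner x x)"
    and cinner_eq_zero_iff: "cinner x x = 0 \<longleftrightarrow> x = 0"

definition cnorm :: "'a::complex_inner \<Rightarrow> real" where
  "cnorm x = sqrt (Re (cinner x x))"

text \<open>Hilbert space: complete with respect to the induced norm
  (the norm is written out, see cnorm).\<close>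
class chilbert_space = complex_inner +
  assumes norm_complete:
    "(\<forall>e>0. \<exists>N. \<forall>m\<ge>N. \<forall>n\<ge>N. sqrt (Re (cinner ((X::nat \<Rightarrow> 'a) m - X n) (X m - X n))) < e) \<Longrightarrow>
     \<exists>L. \<forall>e>0. \<exists>N. \<forall>n\<ge>N. sqrt (Re (cinner (X n - L) (X n - L))) < e"

instantiation complex :: chilbert_space
begin
definition scaleC_complex_def: "scaleC a (x::complex) = a * x"
definition cinner_complex_def: "cinner (x::complex) y = cnj x * y"
instance
proof
  fix X :: "nat \<Rightarrow> complex"
  assume a: "\<forall>e>0. \<exists>N. \<forall>m\<ge>N. \<forall>n\<ge>N. sqrt (Re (cinner (X m - X n) (X m - X n))) < e"
  have cn: "sqrt (Re (cinner z z)) = norm z" for z :: complex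
    by (simp add: cinner_complex_def complex_mod_sqrt_Re_mult_cnj mult.commute)
  from a have "Cauchy X" using cn by (simp add: Cauchy_def dist_norm)
  then have "convergent X" by (simp add: Cauchy_convergent_iff)
  then obtain L where "X \<longlonglongrightarrow> L" by (auto simp: convergent_def)
  then show "\<exists>L. \<forall>e>0. \<exists>N. \<forall>n\<ge>N. sqrt (Re (cinner (X n - L) (X n - L))) < e"
    using cn by (auto simp: LIMSEQ_iff)
qed (auto simp: scaleC_complex_def cinner_complex_def algebra_simps)
end

text \<open>An operator is given by its domain \<open>D\<close> and its action \<open>T\<close> (values of
  \<open>T\<close> outside \<open>D\<close> are irrelevant).\<close>

definition csubspace :: "'a::complex_vector set \<Rightarrow> bool" where
  "csubspace S \<longleftrightarrow> 0 \<in> S \<and> (\<forall>x\<in>S. \<forall>y\<in>S. x + y \<in> S) \<and> (\<forall>c. \<forall>x\<in>S. c *\<^sub>C x \<in> S)"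

definition linear_op :: "'a::complex_vector set \<Rightarrow> ('a \<Rightarrow> 'a) \<Rightarrow> bool" where
  "linear_op D T \<longleftrightarrow> csubspace D \<and>
     (\<forall>x\<in>D. \<forall>y\<in>D. T (x + y) = T x + T y) \<and> (\<forall>c. \<forall>x\<in>D. T (c *\<^sub>C x) = c *\<^sub>C T x)"

definition cdense :: "'a::chilbert_space set \<Rightarrow> bool" where
  "cdense S \<longleftrightarrow> (\<forall>x. \<forall>e>0. \<exists>y\<in>S. cnorm (x - y) < e)"

definition adjoint_dom :: "'a::chilbert_space set \<Rightarrow> ('a \<Rightarrow> 'a) \<Rightarrow> 'a set" where
  "adjoint_dom D T = {y. \<exists>z. \<forall>x\<in>D. cinner (T x) y = cinner x z}"

definition adjoint_op :: "'a::chilbert_space set \<Rightarrow> ('a \<Rightarrow> 'a) \<Rightarrow> 'a \<Rightarrow> 'a" where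
  "adjoint_op D T y = (THE z. \<forall>x\<in>D. cinner (T x) y = cinner x z)"

definition self_adjoint :: "'a::chilbert_space set \<Rightarrow> ('a \<Rightarrow> 'a) \<Rightarrow> bool" where
  "self_adjoint D T \<longleftrightarrow> linear_op D T \<and> cdense D \<and>
     adjoint_dom D T = D \<and> (\<forall>y\<in>D. adjoint_op D T y = T y)"

definition resolvent :: "'a::chilbert_space set \<Rightarrow> ('a \<Rightarrow> 'a) \<Rightarrow> complex \<Rightarrow> 'a \<Rightarrow> 'a" where
  "resolvent D T l = the_inv_into D (\<lambda>x. T x - l *\<^sub>C x)"

definition resolvent_set :: "'a::chilbert_space set \<Rightarrow> ('a \<Rightarrow> 'a) \<Rightarrow> complex set" where
  "resolvent_set D T = {l. bij_betw (\<lambda>x. T x - l *\<^sub>C x) D UNIV \<and>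
      (\<exists>C. \<forall>y. cnorm (resolvent D T l y) \<le> C * cnorm y)}"

definition prod_dom :: "'a set \<Rightarrow> 'a set \<Rightarrow> ('a \<Rightarrow> 'a) \<Rightarrow> 'a set" where
  "prod_dom DS DT T = {f \<in> DT. T f \<in> DS}"

end

theory Submission
  imports Defs
begin

text \<open>Only the algebra of resolvents is needed: \<open>R\<^sub>l(T)\<close> is a linear bijection
  onto \<open>D(T)\<close> inverting \<open>T - l I\<close>, and \<open>R\<^sub>a - R\<^sub>b = (a - b) R\<^sub>a R\<^sub>b\<close>.
  For \<open>g = (B - \<mu>q I) f\<close>, i.e. \<open>f = R\<^sub>\<mu>\<^sub>q(B) g\<close>, the relation \<open>ABf = qBAf\<close> is
  equivalent to \<open>R\<^sub>\<mu>(B) A g = q A f\<close>, which gives (i) and (ii). For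
  \<open>h = (A - \<lambda>q I) g\<close>, expanding \<open>R\<^sub>\<mu>(B) g\<close> by the resolvent identity at \<open>\<mu>, \<mu>q\<close>
  and applying \<open>R\<^sub>\<lambda>(A)\<close> turns this relation into \<open>(\<dagger>\<dagger>)\<close>; as \<open>q \<noteq> 0\<close> the
  computation can be reversed.\<close>

interpretation complex_vector: vector_space "scaleC :: complex \<Rightarrow> 'a \<Rightarrow> 'a::complex_vector"
  by unfold_locales (auto simp: scaleC_add_right scaleC_add_left scaleC_scaleC scaleC_one)

lemmas scaleC_distribs = complex_vector.scale_right_distrib complex_vector.scale_right_diff_distrib
  complex_vector.scale_left_distrib complex_vector.scale_left_diff_distrib scaleC_scaleC

lemma csubspace_iff_subspace: "csubspace S \<longleftrightarrow> complex_vector.subspace S"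
  unfolding csubspace_def complex_vector.subspace_def ..

lemmas csubspace_0 = complex_vector.subspace_0[folded csubspace_iff_subspace]
  and csubspace_add = complex_vector.subspace_add[folded csubspace_iff_subspace]
  and csubspace_diff = complex_vector.subspace_diff[folded csubspace_iff_subspace]
  and csubspace_scaleC = complex_vector.subspace_scale[folded csubspace_iff_subspace]

lemma scaleC_cancel_nonzero: "c \<noteq> 0 \<Longrightarrow> inverse c *\<^sub>C (c *\<^sub>C x) = (x::'a::complex_vector)"
  by (simp add: scaleC_scaleC scaleC_one)

lemma csubspace_scaleC_iff:
  "csubspace S \<Longrightarrow> c \<noteq> 0 \<Longrightarrow> c *\<^sub>C x \<in> S \<longleftrightarrow> x \<in> S"
  by (metis csubspace_scaleC scaleC_cancel_nonzero)

lemma linear_op_csubspace: "linear_op D T \<Longrightarrow> csubspace D"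
  unfolding linear_op_def by blast

lemma linear_op_add: "linear_op D T \<Longrightarrow> x \<in> D \<Longrightarrow> y \<in> D \<Longrightarrow> T (x + y) = T x + T y"
  unfolding linear_op_def by blast

lemma linear_op_scaleC: "linear_op D T \<Longrightarrow> x \<in> D \<Longrightarrow> T (c *\<^sub>C x) = c *\<^sub>C T x"
  unfolding linear_op_def by blast

lemma linear_op_diff:
  assumes T: "linear_op D T" and "x \<in> D" "y \<in> D"
  shows "T (x - y) = T x - T y"
proof -
  have "(-1) *\<^sub>C y \<in> D"
    using assms csubspace_scaleC linear_op_csubspace by blast
  then have "T (x + (-1) *\<^sub>C y) = T x + (-1) *\<^sub>C T y"
    using assms linear_op_add linear_op_scaleC by metis
  then show ?thesis
    by simp
qed

lemma linear_op_shift: "linear_op D T \<Longrightarrow> linear_op D (\<lambda>x. T x - l *\<^sub>C x)"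
  unfolding linear_op_def
  by (auto simp: scaleC_distribs complex_vector.scale_left_commute)

lemma csubspace_linear_image:
  assumes T: "linear_op D T" and S: "csubspace S" "S \<subseteq> D"
  shows "csubspace (T ` S)"
  unfolding csubspace_def
proof (intro conjI ballI allI)
  have "T 0 = 0"
    using linear_op_scaleC[OF T, of 0 0] T linear_op_csubspace csubspace_0 by fastforce
  then show "0 \<in> T ` S"
    using S csubspace_0 by (metis image_eqI)
next
  fix x y assume "x \<in> T ` S" "y \<in> T ` S"
  then obtain u v where "u \<in> S" "v \<in> S" "x = T u" "y = T v"
    by blast
  then show "x + y \<in> T ` S"
    using S csubspace_add linear_op_add[OF T] by (metis image_eqI subsetD)
next
  fix c x assume "x \<in> T ` S"
  then obtain u where "u \<in> S" "x = T u"
    by blast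
  then show "c *\<^sub>C x \<in> T ` S"
    using S csubspace_scaleC linear_op_scaleC[OF T] by (metis image_eqI subsetD)
qed

lemma linear_op_the_inv_into:
  assumes S: "linear_op D S" and bij: "bij_betw S D UNIV"
  shows "linear_op UNIV (the_inv_into D S)"
proof -
  have D: "csubspace D"
    using S linear_op_csubspace by blast
  have inv: "the_inv_into D S (S x) = x" if "x \<in> D" for x
    using bij that by (simp add: bij_betw_def the_inv_into_f_f)
  have R: "the_inv_into D S y \<in> D" "S (the_inv_into D S y) = y" for y
    using bij by (auto simp: bij_betw_def the_inv_into_into f_the_inv_into_f)
  show ?thesis
    unfolding linear_op_def
    using inv[of "the_inv_into D S _ + the_inv_into D S _"]
      inv[of "_ *\<^sub>C the_inv_into D S _"] R D
    by (auto simp: csubspace_def linear_op_add[OF S] linear_op_scaleC[OF S])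
qed

locale resolvent_point =
  fixes D :: "'a::chilbert_space set" and T :: "'a \<Rightarrow> 'a" and l :: complex
  assumes linear: "linear_op D T"
    and bij: "bij_betw (\<lambda>x. T x - l *\<^sub>C x) D UNIV"
begin

lemma resolvent_in_domain: "resolvent D T l y \<in> D"
  using bij unfolding resolvent_def bij_betw_def by (auto intro: the_inv_into_into)

lemma resolvent_eq: "T (resolvent D T l y) - l *\<^sub>C resolvent D T l y = y"
  using bij unfolding resolvent_def bij_betw_def by (auto intro: f_the_inv_into_f)

lemma resolvent_unique: "x \<in> D \<Longrightarrow> T x - l *\<^sub>C x = y \<Longrightarrow> resolvent D T l y = x"
  using bij unfolding resolvent_def bij_betw_def by (auto intro: the_inv_into_f_f)

lemma linear_resolvent: "linear_op UNIV (resolvent D T l)"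
  unfolding resolvent_def
  by (rule linear_op_the_inv_into[OF linear_op_shift[OF linear] bij])

lemma resolvent_add: "resolvent D T l (x + y) = resolvent D T l x + resolvent D T l y"
  using linear_op_add[OF linear_resolvent] by simp

lemma resolvent_diff: "resolvent D T l (x - y) = resolvent D T l x - resolvent D T l y"
  using linear_op_diff[OF linear_resolvent] by simp

lemma resolvent_scaleC: "resolvent D T l (c *\<^sub>C x) = c *\<^sub>C resolvent D T l x"
  using linear_op_scaleC[OF linear_resolvent] by simp

end

lemma resolvent_point_of_resolvent_set:
  "linear_op D T \<Longrightarrow> l \<in> resolvent_set D T \<Longrightarrow> resolvent_point D T l"
  unfolding resolvent_point_def resolvent_set_def by blast

lemma resolvent_identity:
  assumes a: "resolvent_point D T a" and b: "resolvent_point D T b"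
  shows "resolvent D T a g - resolvent D T b g =
    (a - b) *\<^sub>C resolvent D T a (resolvent D T b g)"
proof -
  interpret a: resolvent_point D T a by fact
  interpret b: resolvent_point D T b by fact
  define u v where "u = resolvent D T a g" and "v = resolvent D T b g"
  have uv: "u \<in> D" "v \<in> D"
    unfolding u_def v_def by (rule a.resolvent_in_domain b.resolvent_in_domain)+
  have "T (u - v) - a *\<^sub>C (u - v) = (T u - a *\<^sub>C u) - (T v - b *\<^sub>C v) + (a - b) *\<^sub>C v"
    using uv by (simp add: linear_op_diff[OF a.linear] scaleC_distribs algebra_simps)
  also have "\<dots> = (a - b) *\<^sub>C v"
    unfolding u_def v_def a.resolvent_eq b.resolvent_eq by simp
  finally have "resolvent D T a ((a - b) *\<^sub>C v) = u - v"
    using a.resolvent_unique csubspace_diff[OF linear_op_csubspace[OF a.linear] uv] by blast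
  then show ?thesis
    unfolding u_def v_def a.resolvent_scaleC by simp
qed

locale q_commutation =
  A: resolvent_point DA A l + Aq: resolvent_point DA A "l * q" +
  B: resolvent_point DB B m + Bq: resolvent_point DB B "m * q"
  for DA DB :: "'a::chilbert_space set" and A B and l m q :: complex +
  assumes q_nonzero: "q \<noteq> 0"
begin

abbreviation "RA \<equiv> resolvent DA A"
abbreviation "RB \<equiv> resolvent DB B"

lemma csubspace_DA: "csubspace DA"
  using A.linear linear_op_csubspace by blast

lemma csubspace_DB: "csubspace DB"
  using B.linear linear_op_csubspace by blast

lemma resolvent_identity_B: "RB m g = RB (m * q) g + (m - m * q) *\<^sub>C RB m (RB (m * q) g)"
  using resolvent_identity[OF B.resolvent_point_axioms Bq.resolvent_point_axioms, of g]
  by (simp add: algebra_simps)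

lemma resolvent_commutation_of_commutation:
  assumes f: "f \<in> prod_dom DA DB B \<inter> prod_dom DB DA A"
    and comm: "A (B f) = q *\<^sub>C B (A f)"
  shows "B f - (m * q) *\<^sub>C f \<in> DA"
    and "RB (m * q) (B f - (m * q) *\<^sub>C f) = f"
    and "RB m (A (B f - (m * q) *\<^sub>C f)) = q *\<^sub>C A f"
proof -
  let ?g = "B f - (m * q) *\<^sub>C f"
  have dom: "f \<in> DA" "B f \<in> DA" "f \<in> DB" "A f \<in> DB"
    using f by (auto simp: prod_dom_def)
  show "?g \<in> DA"
    using dom by (simp add: csubspace_diff csubspace_scaleC csubspace_DA)
  show "RB (m * q) ?g = f"
    using Bq.resolvent_unique dom by blast
  have "(m * q) *\<^sub>C f \<in> DA"
    using csubspace_scaleC[OF csubspace_DA dom(1)] .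
  then have "A ?g = q *\<^sub>C B (A f) - (m * q) *\<^sub>C A f"
    unfolding comm[symmetric] using dom
    by (simp add: linear_op_diff[OF A.linear] linear_op_scaleC[OF A.linear])
  also have "\<dots> = B (q *\<^sub>C A f) - m *\<^sub>C (q *\<^sub>C A f)"
    using dom by (simp add: linear_op_scaleC[OF B.linear] scaleC_scaleC mult.commute)
  finally show "RB m (A ?g) = q *\<^sub>C A f"
    using B.resolvent_unique csubspace_scaleC[OF csubspace_DB dom(4)] by metis
qed

lemma commutation_of_resolvent_commutation:
  assumes g: "g \<in> DA" and f: "RB (m * q) g = f" "f \<in> DA"
    and comm: "RB m (A g) = q *\<^sub>C A f"
  shows "f \<in> prod_dom DA DB B \<inter> prod_dom DB DA A" "A (B f) = q *\<^sub>C B (A f)"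
proof -
  have fB: "f \<in> DB"
    using f Bq.resolvent_in_domain by blast
  have Bf: "B f = g + (m * q) *\<^sub>C f"
    using Bq.resolvent_eq[of g] f by (simp add: algebra_simps)
  have "q *\<^sub>C A f \<in> DB"
    using comm B.resolvent_in_domain by metis
  then have AfB: "A f \<in> DB"
    using csubspace_scaleC_iff[OF csubspace_DB q_nonzero] by blast
  have "B f \<in> DA"
    unfolding Bf using g f(2) by (simp add: csubspace_add csubspace_scaleC csubspace_DA)
  then show "f \<in> prod_dom DA DB B \<inter> prod_dom DB DA A"
    unfolding prod_dom_def using f(2) fB AfB by blast
  have "q *\<^sub>C B (A f) - m *\<^sub>C (q *\<^sub>C A f) = A g"
    using B.resolvent_eq[of "A g"] AfB
    by (simp add: comm linear_op_scaleC[OF B.linear] scaleC_distribs)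
  then have "q *\<^sub>C B (A f) = A g + (m * q) *\<^sub>C A f"
    by (simp add: scaleC_scaleC mult.commute algebra_simps)
  also have "\<dots> = A (B f)"
    unfolding Bf using g f(2) csubspace_scaleC[OF csubspace_DA f(2)]
    by (simp add: linear_op_add[OF A.linear] linear_op_scaleC[OF A.linear])
  finally show "A (B f) = q *\<^sub>C B (A f)" ..
qed

lemma product_identity_of_resolvent_commutation:
  assumes g: "g \<in> DA" and f: "RB (m * q) g = f" "f \<in> DA"
    and comm: "RB m (A g) = q *\<^sub>C A f"
    and h: "h = A g - (l * q) *\<^sub>C g"
  shows "RA l (RB m h) = q *\<^sub>C RB (m * q) (RA (l * q) h) +
    (m * l * q * (q - 1)) *\<^sub>C RA l (RB m (RB (m * q) (RA (l * q) h)))"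
proof -
  have "RA (l * q) h = g"
    using Aq.resolvent_unique g h by metis
  moreover have "RB m h = q *\<^sub>C (A f - l *\<^sub>C f) + (m * l * q * (q - 1)) *\<^sub>C RB m f"
    unfolding h B.resolvent_diff B.resolvent_scaleC comm resolvent_identity_B[of g] f(1)
    by (simp add: scaleC_distribs algebra_simps)
  moreover have "RA l (q *\<^sub>C (A f - l *\<^sub>C f)) = q *\<^sub>C f"
    using A.resolvent_scaleC A.resolvent_unique f(2) by metis
  ultimately show ?thesis
    using f(1) by (simp add: A.resolvent_add A.resolvent_scaleC)
qed

lemma resolvent_commutation_of_product_identity:
  assumes g: "RA (l * q) h = g" and f: "RB (m * q) g = f"
    and prod: "RA l (RB m h) = q *\<^sub>C RB (m * q) (RA (l * q) h) +
      (m * l * q * (q - 1)) *\<^sub>C RA l (RB m (RB (m * q) (RA (l * q) h)))"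
  shows "f \<in> DA" "RB m (A g) = q *\<^sub>C A f"
proof -
  define y where "y = RB m h - (m * l * q * (q - 1)) *\<^sub>C RB m f"
  have Ry: "RA l y = q *\<^sub>C f"
    using prod unfolding y_def g f A.resolvent_diff A.resolvent_scaleC by simp
  then have "q *\<^sub>C f \<in> DA"
    using A.resolvent_in_domain by metis
  then show fA: "f \<in> DA"
    using csubspace_scaleC_iff[OF csubspace_DA q_nonzero] by blast
  have y: "y = q *\<^sub>C (A f - l *\<^sub>C f)"
    using A.resolvent_eq[of y] fA
    by (simp add: Ry linear_op_scaleC[OF A.linear] scaleC_distribs mult.commute)
  have "A g = h + (l * q) *\<^sub>C g"
    using Aq.resolvent_eq[of h] g by (simp add: algebra_simps)
  then have "RB m (A g) = RB m h + (l * q) *\<^sub>C RB m g"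
    by (simp add: B.resolvent_add B.resolvent_scaleC)
  also have "\<dots> = y + (m * l * q * (q - 1)) *\<^sub>C RB m f + (l * q) *\<^sub>C RB m g"
    unfolding y_def by simp
  also have "\<dots> = q *\<^sub>C A f"
    unfolding y resolvent_identity_B[of g] f by (simp add: scaleC_distribs algebra_simps)
  finally show "RB m (A g) = q *\<^sub>C A f" .
qed

end

theorem mainTheorem2:
  fixes q l m :: complex
    and DA DB :: "'a::chilbert_space set" and A B :: "'a \<Rightarrow> 'a"
  assumes q1: "cmod q = 1" and q2: "q\<^sup>2 \<noteq> 1"
    and sA: "self_adjoint DA A" and sB: "self_adjoint DB B"
    and rA: "l \<in> resolvent_set DA A" "l * q \<in> resolvent_set DA A"
    and rB: "m \<in> resolvent_set DB B" "m * q \<in> resolvent_set DB B"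
  shows
    \<comment> \<open>(i)\<close>
    "(\<forall>D. csubspace D \<and> D \<subseteq> prod_dom DA DB B \<inter> prod_dom DB DA A \<and>
          (\<forall>f\<in>D. A (B f) = q *\<^sub>C B (A f)) \<longrightarrow>
        csubspace ((\<lambda>f. B f - (m * q) *\<^sub>C f) ` D) \<and>
        (\<lambda>f. B f - (m * q) *\<^sub>C f) ` D \<subseteq> DA \<and>
        (\<forall>g\<in>(\<lambda>f. B f - (m * q) *\<^sub>C f) ` D.
            resolvent DB B (m * q) g \<in> DA \<and>
            resolvent DB B m (A g) = q *\<^sub>C A (resolvent DB B (m * q) g)))
    \<comment> \<open>(ii)\<close>
     \<and> (\<forall>E. csubspace E \<and> E \<subseteq> DA \<and>
          (\<forall>g\<in>E. resolvent DB B (m * q) g \<in> DA \<and>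
             resolvent DB B m (A g) = q *\<^sub>C A (resolvent DB B (m * q) g)) \<longrightarrow>
        (\<forall>f\<in>resolvent DB B (m * q) ` E.
            f \<in> prod_dom DA DB B \<inter> prod_dom DB DA A \<and> A (B f) = q *\<^sub>C B (A f)))
    \<comment> \<open>(iii)\<close>
     \<and> (\<forall>E. csubspace E \<and> E \<subseteq> DA \<and>
          (\<forall>g\<in>E. resolvent DB B (m * q) g \<in> DA \<and>
             resolvent DB B m (A g) = q *\<^sub>C A (resolvent DB B (m * q) g)) \<longrightarrow>
        (\<forall>h\<in>(\<lambda>g. A g - (l * q) *\<^sub>C g) ` E.
            resolvent DA A l (resolvent DB B m h) =
              q *\<^sub>C resolvent DB B (m * q) (resolvent DA A (l * q) h) +
              (m * l * q * (q - 1)) *\<^sub>C resolvent DA A l (resolvent DB B m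
                 (resolvent DB B (m * q) (resolvent DA A (l * q) h)))))
    \<comment> \<open>(iv)\<close>
     \<and> (\<forall>F. csubspace F \<and>
          (\<forall>h\<in>F. resolvent DA A l (resolvent DB B m h) =
              q *\<^sub>C resolvent DB B (m * q) (resolvent DA A (l * q) h) +
              (m * l * q * (q - 1)) *\<^sub>C resolvent DA A l (resolvent DB B m
                 (resolvent DB B (m * q) (resolvent DA A (l * q) h)))) \<longrightarrow>
        (\<forall>g\<in>resolvent DA A (l * q) ` F.
            resolvent DB B (m * q) g \<in> DA \<and>
            resolvent DB B m (A g) = q *\<^sub>C A (resolvent DB B (m * q) g)))"
proof -
  have "q \<noteq> 0"
    using q1 by auto
  moreover have "linear_op DA A" "linear_op DB B"
    using sA sB by (simp_all add: self_adjoint_def)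
  ultimately interpret q_commutation DA DB A B l m q
    using rA rB by (simp add: q_commutation_def q_commutation_axioms_def
        resolvent_point_of_resolvent_set)
  show ?thesis
    apply (intro conjI allI impI)
    subgoal
      by (intro csubspace_linear_image[OF linear_op_shift[OF B.linear]]) (auto simp: prod_dom_def)
    subgoal
      using resolvent_commutation_of_commutation(1) by blast
    subgoal
      using resolvent_commutation_of_commutation by (simp add: subset_iff prod_dom_def)
    subgoal
      using commutation_of_resolvent_commutation[OF _ refl] by blast
    subgoal
      using product_identity_of_resolvent_commutation[OF _ refl _ _ refl] by blast
    subgoal
      using resolvent_commutation_of_product_identity[OF refl refl] by blast
    done
qed

end
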